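(* For every signed subcubic graph $\Sigma$, $l_0(\Sigma) = l(\Sigma)$.
   Context: A signed graph $\Sigma = (G,\sigma)$ consists of a finite graph $G$ (loops and multiple edges allowed) and a sign function $\sigma: E(G) \to \{+1,-1\}$. A circle is a connected nonempty $2$-regular subgraph (a loop is a circle of length $1$, a pair of parallel edges forms a circle of length $2$); a circle is positive if the product of the signs of its edges is $+1$ and negative otherwise. $\Sigma$ is balanced if all its circles are positive. The frustration index $l(\Sigma)$ is the smallest number of edges whose deletion from $\Sigma$ leaves a balanced signed graph. The frustration number $l_0(\Sigma)$ is the smallest number of vertices whose deletion (together with all incident edges) from $\Sigma$ leaves a balanced signed graph. $\Sigma$ is subcubic if every vertex of the underlying graph $G$ has degree at most $3$. *)

theory Defs
  imports Main
begin

definition signed_graph :: "'v set \<Rightarrow> 'e set \<Rightarrow> ('e \<Rightarrow> 'v set) \<Rightarrow> ('e \<Rightarrow> int) \<Rightarrow> bool" where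
  "signed_graph V E ends sigma \<longleftrightarrow> finite V \<and> finite E \<and>
     (\<forall>e\<in>E. ends e \<subseteq> V \<and> 1 \<le> card (ends e) \<and> card (ends e) \<le> 2) \<and>
     (\<forall>e\<in>E. sigma e = 1 \<or> sigma e = -1)"

definition degree :: "'e set \<Rightarrow> ('e \<Rightarrow> 'v set) \<Rightarrow> 'v \<Rightarrow> nat" where
  "degree C ends v = card {e\<in>C. v \<in> ends e \<and> card (ends e) = 2}
                     + 2 * card {e\<in>C. ends e = {v}}"

definition verts_of :: "'e set \<Rightarrow> ('e \<Rightarrow> 'v set) \<Rightarrow> 'v set" where
  "verts_of C ends = \<Union> (ends ` C)"

definition adj_rel :: "'e set \<Rightarrow> ('e \<Rightarrow> 'v set) \<Rightarrow> ('v \<times> 'v) set" where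
  "adj_rel C ends = {(x, y). \<exists>e\<in>C. ends e = {x, y}}"

definition is_circle :: "'e set \<Rightarrow> ('e \<Rightarrow> 'v set) \<Rightarrow> 'e set \<Rightarrow> bool" where
  "is_circle E ends C \<longleftrightarrow> C \<subseteq> E \<and> C \<noteq> {} \<and>
     (\<forall>v\<in>verts_of C ends. degree C ends v = 2) \<and>
     (\<forall>u\<in>verts_of C ends. \<forall>w\<in>verts_of C ends. (u, w) \<in> (adj_rel C ends)\<^sup>*)"

definition balanced :: "'e set \<Rightarrow> ('e \<Rightarrow> 'v set) \<Rightarrow> ('e \<Rightarrow> int) \<Rightarrow> bool" where
  "balanced E ends sigma \<longleftrightarrow> (\<forall>C. is_circle E ends C \<longrightarrow> (\<Prod>e\<in>C. sigma e) = 1)"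

definition frustration_index :: "'v set \<Rightarrow> 'e set \<Rightarrow> ('e \<Rightarrow> 'v set) \<Rightarrow> ('e \<Rightarrow> int) \<Rightarrow> nat" where
  "frustration_index V E ends sigma =
     (LEAST k. \<exists>F. F \<subseteq> E \<and> card F = k \<and> balanced (E - F) ends sigma)"

definition frustration_number :: "'v set \<Rightarrow> 'e set \<Rightarrow> ('e \<Rightarrow> 'v set) \<Rightarrow> ('e \<Rightarrow> int) \<Rightarrow> nat" where
  "frustration_number V E ends sigma =
     (LEAST k. \<exists>X. X \<subseteq> V \<and> card X = k \<and>
        balanced {e\<in>E. ends e \<inter> X = {}} ends sigma)"

definition subcubic :: "'v set \<Rightarrow> 'e set \<Rightarrow> ('e \<Rightarrow> 'v set) \<Rightarrow> bool" where
  "subcubic V E ends \<longleftrightarrow> (\<forall>v\<in>V. degree E ends v \<le> 3)"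

end

theory Submission
  imports Defs
begin

(* A switching s : V -> {1, -1} makes an edge consistent when its sign is the product of s at
   its two ends (a loop is consistent iff it is positive); by Harary's theorem a signed graph is
   balanced iff some switching makes all its edges consistent.
   Deleting one end of every edge of a balancing edge set F balances the graph, so l0 <= l.
   Conversely, let X be a balancing vertex set and s a switching consistent on the edges
   avoiding X. Put the vertices of X back one at a time: at a vertex x of degree at most 3 one
   of the two values of s x leaves at most one edge at x inconsistent, and that edge is
   deleted. This balances the graph with at most |X| edge deletions, so l <= l0. *)

definition switching :: "('v \<Rightarrow> int) \<Rightarrow> bool" where
  "switching s \<longleftrightarrow> (\<forall>v. s v = 1 \<or> s v = -1)"

definition consistent :: "('e \<Rightarrow> 'v set) \<Rightarrow> ('e \<Rightarrow> int) \<Rightarrow> ('v \<Rightarrow> int) \<Rightarrow> 'e \<Rightarrow> bool" where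
  "consistent ends sigma s e \<longleftrightarrow>
     sigma e = (if card (ends e) = 2 then (\<Prod>v\<in>ends e. s v) else 1)"

definition signed_edges :: "'e set \<Rightarrow> ('e \<Rightarrow> 'v set) \<Rightarrow> ('e \<Rightarrow> int) \<Rightarrow> bool" where
  "signed_edges E ends sigma \<longleftrightarrow> finite E \<and>
     (\<forall>e\<in>E. 1 \<le> card (ends e) \<and> card (ends e) \<le> 2) \<and> (\<forall>e\<in>E. sigma e = 1 \<or> sigma e = -1)"

definition end_multiplicity :: "('e \<Rightarrow> 'v set) \<Rightarrow> 'e \<Rightarrow> nat" where
  "end_multiplicity ends e = (if card (ends e) = 2 then 1 else 2)"

lemma switching_square:
  assumes "switching s"
  shows "s v * s v = 1"
proof -
  have "s v = 1 \<or> s v = -1"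
    using assms unfolding switching_def by blast
  then show ?thesis
    by auto
qed

lemma signed_edges_subset: "signed_edges E ends sigma \<Longrightarrow> E' \<subseteq> E \<Longrightarrow> signed_edges E' ends sigma"
  unfolding signed_edges_def by (meson finite_subset subsetD)

lemma signed_edges_loop_or_link:
  assumes "signed_edges E ends sigma" "e \<in> E"
  obtains a where "ends e = {a}" | a b where "a \<noteq> b" "ends e = {a, b}"
proof -
  have "card (ends e) = 1 \<or> card (ends e) = 2"
    using assms unfolding signed_edges_def by force
  then show ?thesis
    using that by (auto simp: card_1_singleton_iff card_2_iff)
qed

lemma signed_edges_sign:
  "signed_edges E ends sigma \<Longrightarrow> e \<in> E \<Longrightarrow> sigma e = 1 \<or> sigma e = -1"
  unfolding signed_edges_def by blast

lemma degree_eq_sum_end_multiplicity: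
  assumes "signed_edges E ends sigma"
  shows "degree E ends v = (\<Sum>e\<in>{e\<in>E. v \<in> ends e}. end_multiplicity ends e)"
proof -
  have fin: "finite E"
    using assms unfolding signed_edges_def by blast
  have loops: "{e\<in>E. v \<in> ends e} \<inter> - {e. card (ends e) = 2} = {e\<in>E. ends e = {v}}"
    by (auto elim: signed_edges_loop_or_link[OF assms])
  have "(\<Sum>e\<in>{e\<in>E. v \<in> ends e}. end_multiplicity ends e)
      = card ({e\<in>E. v \<in> ends e} \<inter> {e. card (ends e) = 2}) + 2 * card {e\<in>E. ends e = {v}}"
    unfolding end_multiplicity_def using fin by (simp add: sum.If_cases loops)
  also have "{e\<in>E. v \<in> ends e} \<inter> {e. card (ends e) = 2} = {e\<in>E. v \<in> ends e \<and> card (ends e) = 2}"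
    by blast
  finally show ?thesis
    unfolding degree_def by simp
qed

lemma degree_mono: "finite E \<Longrightarrow> E' \<subseteq> E \<Longrightarrow> degree E' ends v \<le> degree E ends v"
  unfolding degree_def by (intro add_mono mult_le_mono2 card_mono) (auto intro: finite_subset)

lemma is_circle_mono: "is_circle E' ends C \<Longrightarrow> E' \<subseteq> E \<Longrightarrow> is_circle E ends C"
  unfolding is_circle_def by blast

lemma balanced_subset: "balanced E ends sigma \<Longrightarrow> E' \<subseteq> E \<Longrightarrow> balanced E' ends sigma"
  unfolding balanced_def using is_circle_mono by blast

lemma balanced_empty: "balanced {} ends sigma"
  unfolding balanced_def is_circle_def by blast

lemma consistent_cong:
  "(\<And>v. v \<in> ends e \<Longrightarrow> s v = s' v) \<Longrightarrow> consistent ends sigma s e = consistent ends sigma s' e"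
  unfolding consistent_def by (simp cong: prod.cong)

lemma consistent_sign_eq_prod_power:
  assumes "signed_edges E ends sigma" "e \<in> E" "switching s" "consistent ends sigma s e"
  shows "sigma e = (\<Prod>v\<in>ends e. s v ^ end_multiplicity ends e)"
  using assms(1,2)
proof (cases rule: signed_edges_loop_or_link)
  case (1 a)
  then show ?thesis
    using assms(4) switching_square[OF assms(3)]
    unfolding consistent_def end_multiplicity_def by (simp add: power2_eq_square)
next
  case (2 a b)
  then show ?thesis
    using assms(4) unfolding consistent_def end_multiplicity_def by simp
qed

lemma balanced_if_consistent:
  assumes sE: "signed_edges E ends sigma" and s: "switching s"
    and cons: "\<forall>e\<in>E. consistent ends sigma s e"
  shows "balanced E ends sigma"
  unfolding balanced_def
proof (intro allI impI)
  fix C assume circ: "is_circle E ends C"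
  then have CE: "C \<subseteq> E"
    unfolding is_circle_def by blast
  then have sC: "signed_edges C ends sigma"
    using sE signed_edges_subset by blast
  define W where "W = verts_of C ends"
  define m where "m = end_multiplicity ends"
  have fC: "finite C"
    using sC unfolding signed_edges_def by blast
  have "finite (ends e)" if "e \<in> C" for e
    using sC that by (auto elim: signed_edges_loop_or_link)
  then have fW: "finite W"
    unfolding W_def verts_of_def using fC by blast
  have edge: "sigma e = (\<Prod>v\<in>W. if v \<in> ends e then s v ^ m e else 1)" if "e \<in> C" for e
  proof -
    have "ends e \<subseteq> W"
      using that unfolding W_def verts_of_def by blast
    then have "{v\<in>W. v \<in> ends e} = ends e"
      by blast
    then show ?thesis
      using consistent_sign_eq_prod_power[OF sE _ s] cons CE that prod.inter_filter[OF fW]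
      unfolding m_def by (metis subsetD)
  qed
  have vertex: "(\<Prod>e\<in>C. if v \<in> ends e then s v ^ m e else 1) = s v ^ degree C ends v" for v
  proof -
    have "(\<Prod>e\<in>C. if v \<in> ends e then s v ^ m e else 1) = (\<Prod>e\<in>{e\<in>C. v \<in> ends e}. s v ^ m e)"
      using prod.inter_filter[OF fC] by metis
    also have "\<dots> = s v ^ (\<Sum>e\<in>{e\<in>C. v \<in> ends e}. m e)"
      by (simp add: power_sum)
    finally show ?thesis
      unfolding m_def degree_eq_sum_end_multiplicity[OF sC] .
  qed
  have "(\<Prod>e\<in>C. sigma e) = (\<Prod>e\<in>C. \<Prod>v\<in>W. if v \<in> ends e then s v ^ m e else 1)"
    using edge by simp
  also have "\<dots> = (\<Prod>v\<in>W. \<Prod>e\<in>C. if v \<in> ends e then s v ^ m e else 1)"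
    by (rule prod.swap)
  also have "\<dots> = (\<Prod>v\<in>W. s v * s v)"
    using vertex circ unfolding is_circle_def W_def by (simp add: power2_eq_square)
  also have "\<dots> = 1"
    using switching_square[OF s] by simp
  finally show "(\<Prod>e\<in>C. sigma e) = 1" .
qed

fun edge_path :: "'e set \<Rightarrow> ('e \<Rightarrow> 'v set) \<Rightarrow> 'v list \<Rightarrow> 'e list \<Rightarrow> bool" where
  "edge_path E ends [v] [] = True"
| "edge_path E ends (v # w # vs) (f # fs) = (f \<in> E \<and> ends f = {v, w} \<and> edge_path E ends (w # vs) fs)"
| "edge_path E ends _ _ = False"

lemma edge_path_drop:
  "edge_path E ends vs fs \<Longrightarrow> k < length vs \<Longrightarrow> edge_path E ends (drop k vs) (drop k fs)"
proof (induction E ends vs fs arbitrary: k rule: edge_path.induct)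
  case (2 E ends v w vs f fs)
  then show ?case by (cases k) auto
qed auto

lemma edge_path_nonempty: "edge_path E ends vs fs \<Longrightarrow> vs \<noteq> []"
  by (cases vs; cases fs) auto

lemma edge_path_edges_subset: "edge_path E ends vs fs \<Longrightarrow> set fs \<subseteq> E"
  by (induction E ends vs fs rule: edge_path.induct) auto

lemma edge_path_ends_subset: "edge_path E ends vs fs \<Longrightarrow> f \<in> set fs \<Longrightarrow> ends f \<subseteq> set vs"
  by (induction E ends vs fs rule: edge_path.induct) auto

lemma edge_path_card_ends:
  "edge_path E ends vs fs \<Longrightarrow> distinct vs \<Longrightarrow> f \<in> set fs \<Longrightarrow> card (ends f) = 2"
  by (induction E ends vs fs rule: edge_path.induct) auto

lemma edge_path_distinct_edges: "edge_path E ends vs fs \<Longrightarrow> distinct vs \<Longrightarrow> distinct fs"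
proof (induction E ends vs fs rule: edge_path.induct)
  case (2 E ends v w vs f fs)
  have "f \<notin> set fs"
  proof
    assume "f \<in> set fs"
    then have "ends f \<subseteq> set (w # vs)"
      using 2 edge_path_ends_subset by fastforce
    then show False
      using 2 by auto
  qed
  then show ?case
    using 2 by auto
qed auto

lemma rtrancl_adj_rel_imp_edge_path:
  "(u, w) \<in> (adj_rel E ends)\<^sup>* \<Longrightarrow>
   \<exists>vs fs. edge_path E ends vs fs \<and> distinct vs \<and> hd vs = u \<and> last vs = w"
proof (induction rule: converse_rtrancl_induct)
  case base
  show ?case
    by (intro exI[of _ "[w]"] exI[of _ "[]"]) auto
next
  case (step u y)
  then obtain vs fs where p: "edge_path E ends vs fs" "distinct vs" "hd vs = y" "last vs = w"
    by blast
  obtain f where f: "f \<in> E" "ends f = {u, y}"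
    using step(1) unfolding adj_rel_def by blast
  show ?case
  proof (cases "u \<in> set vs")
    case True
    then obtain k where k: "k < length vs" "vs ! k = u"
      by (auto simp: in_set_conv_nth)
    show ?thesis
      using edge_path_drop[OF p(1) k(1)] p k
      by (intro exI[of _ "drop k vs"] exI[of _ "drop k fs"]) (auto simp: hd_drop_conv_nth)
  next
    case False
    obtain vs' where "vs = y # vs'"
      using edge_path_nonempty[OF p(1)] p(3) by (cases vs) auto
    then show ?thesis
      using p f False by (intro exI[of _ "u # vs"] exI[of _ "f # fs"]) auto
  qed
qed

lemma edge_path_incident_edges:
  "edge_path E ends vs fs \<Longrightarrow> distinct vs \<Longrightarrow> 2 \<le> length vs \<Longrightarrow> x \<in> set vs \<Longrightarrow>
   card {g \<in> set fs. x \<in> ends g} = (if x = hd vs \<or> x = last vs then 1 else 2)"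
proof (induction E ends vs fs rule: edge_path.induct)
  case (2 E ends v w vs f fs)
  have fnot: "f \<notin> set fs"
    using edge_path_distinct_edges[OF 2(2) 2(3)] by simp
  show ?case
  proof (cases "vs = []")
    case True
    then have "fs = []"
      using 2 by (cases fs) auto
    then have "{g \<in> set (f # fs). x \<in> ends g} = {f}"
      using 2 True by auto
    then show ?thesis
      using 2 True by auto
  next
    case False
    have sub: "\<forall>g\<in>set fs. ends g \<subseteq> set (w # vs)"
      using 2 edge_path_ends_subset by fastforce
    have lw: "last (w # vs) \<noteq> w"
      using False 2(3) by (cases vs rule: rev_cases) auto
    have len: "2 \<le> length (w # vs)"
      using False by (cases vs) auto
    consider (first) "x = v" | (inner) "x \<noteq> v" "x \<noteq> w" | (second) "x = w"
      by blast
    then show ?thesis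
    proof cases
      case first
      then have "{g \<in> set (f # fs). x \<in> ends g} = {f}"
        using 2 sub by auto
      then show ?thesis
        using first by simp
    next
      case inner
      then have "{g \<in> set (f # fs). x \<in> ends g} = {g \<in> set fs. x \<in> ends g}"
        using 2 by auto
      then show ?thesis
        using 2 inner len by auto
    next
      case second
      have IH: "card {g \<in> set fs. x \<in> ends g} = 1"
        using 2 second len lw by auto
      have "{g \<in> set (f # fs). x \<in> ends g} = insert f {g \<in> set fs. x \<in> ends g}"
        using 2 second by auto
      then show ?thesis
        using IH second fnot lw 2(3) by auto
    qed
  qed
qed auto

lemma edge_path_connected:
  "edge_path E ends vs fs \<Longrightarrow> x \<in> set vs \<Longrightarrow> (hd vs, x) \<in> (adj_rel (set fs) ends)\<^sup>*"
proof (induction E ends vs fs rule: edge_path.induct)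
  case (2 E ends v w vs f fs)
  show ?case
  proof (cases "x = v")
    case False
    have "adj_rel (set fs) ends \<subseteq> adj_rel (set (f # fs)) ends"
      unfolding adj_rel_def by auto
    moreover have "(w, x) \<in> (adj_rel (set fs) ends)\<^sup>*"
      using 2 False by auto
    ultimately have "(w, x) \<in> (adj_rel (set (f # fs)) ends)\<^sup>*"
      using rtrancl_mono by blast
    moreover have "(v, w) \<in> adj_rel (set (f # fs)) ends"
      using 2 unfolding adj_rel_def by auto
    ultimately show ?thesis
      by (simp add: converse_rtrancl_into_rtrancl)
  qed simp
qed auto

lemma edge_path_sign_product:
  "edge_path E ends vs fs \<Longrightarrow> distinct vs \<Longrightarrow> switching s \<Longrightarrow>
   \<forall>g\<in>set fs. consistent ends sigma s g \<Longrightarrow> (\<Prod>g\<in>set fs. sigma g) = s (hd vs) * s (last vs)"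
proof (induction E ends vs fs rule: edge_path.induct)
  case (1 E ends v)
  then show ?case
    using switching_square by simp
next
  case (2 E ends v w vs f fs)
  have "f \<notin> set fs"
    using edge_path_distinct_edges[OF 2(2) 2(3)] by simp
  moreover have "sigma f = s v * s w"
    using 2 unfolding consistent_def by auto
  moreover have "(\<Prod>g\<in>set fs. sigma g) = s w * s (last (w # vs))"
    using 2 by auto
  moreover have "s v * s w * (s w * s l) = s v * s l" for l
    using switching_square[OF 2(4), of w] by (metis mult.assoc mult.left_neutral mult.commute)
  ultimately show ?case
    by simp
qed auto

lemma sym_adj_rel: "sym (adj_rel C ends)"
  unfolding sym_def adj_rel_def by (auto simp: insert_commute)

lemma edge_path_closing_edge_degree:
  assumes p: "edge_path E ends vs fs" and d: "distinct vs" and l: "2 \<le> length vs"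
    and e: "e \<notin> set fs" "ends e = {hd vs, last vs}" and x: "x \<in> set vs"
  shows "degree (insert e (set fs)) ends x = 2"
proof -
  define C where "C = insert e (set fs)"
  obtain a b rest where vs: "vs = a # b # rest"
    using l by (cases vs; cases "tl vs") auto
  have "last vs \<in> set (b # rest)"
    unfolding vs by simp
  then have "hd vs \<noteq> last vs"
    using d unfolding vs by auto
  then have links: "\<forall>g\<in>C. card (ends g) = 2"
    unfolding C_def using edge_path_card_ends[OF p d] e by auto
  have "{g\<in>C. ends g = {x}} = {}"
    using links by auto
  moreover have "{g\<in>C. x \<in> ends g \<and> card (ends g) = 2} = {g\<in>C. x \<in> ends g}"
    using links by auto
  moreover have "card {g\<in>C. x \<in> ends g} = 2"
  proof (cases "x = hd vs \<or> x = last vs")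
    case True
    then have "{g\<in>C. x \<in> ends g} = insert e {g \<in> set fs. x \<in> ends g}"
      using e unfolding C_def by auto
    then show ?thesis
      using edge_path_incident_edges[OF p d l x] True e by simp
  next
    case False
    then have "{g\<in>C. x \<in> ends g} = {g \<in> set fs. x \<in> ends g}"
      using e unfolding C_def by auto
    then show ?thesis
      using edge_path_incident_edges[OF p d l x] False by simp
  qed
  ultimately show ?thesis
    unfolding degree_def C_def[symmetric] by (metis add_0_right card.empty mult_0_right)
qed

lemma edge_path_closing_edge_is_circle:
  assumes p: "edge_path E ends vs fs" and d: "distinct vs" and l: "2 \<le> length vs"
    and e: "e \<notin> set fs" "ends e = {hd vs, last vs}" and sub: "insert e (set fs) \<subseteq> E'"
  shows "is_circle E' ends (insert e (set fs))"
proof -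
  define C where "C = insert e (set fs)"
  have hin: "hd vs \<in> set vs" "last vs \<in> set vs"
    using edge_path_nonempty[OF p] by simp_all
  have vsub: "verts_of C ends \<subseteq> set vs"
    unfolding verts_of_def C_def using edge_path_ends_subset[OF p] e hin by auto
  have conn: "(u, w) \<in> (adj_rel C ends)\<^sup>*" if "u \<in> set vs" "w \<in> set vs" for u w
  proof -
    have "adj_rel (set fs) ends \<subseteq> adj_rel C ends"
      unfolding adj_rel_def C_def by auto
    then have "(hd vs, u) \<in> (adj_rel C ends)\<^sup>*" "(hd vs, w) \<in> (adj_rel C ends)\<^sup>*"
      using edge_path_connected[OF p] that rtrancl_mono by blast+
    moreover have "sym ((adj_rel C ends)\<^sup>*)"
      using sym_rtrancl sym_adj_rel by blast
    ultimately show ?thesis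
      by (meson rtrancl_trans symD)
  qed
  have "C \<subseteq> E'" "C \<noteq> {}"
    using sub unfolding C_def by auto
  moreover have "\<forall>v\<in>verts_of C ends. degree C ends v = 2"
    using edge_path_closing_edge_degree[OF p d l e] vsub unfolding C_def by blast
  ultimately show ?thesis
    unfolding is_circle_def C_def[symmetric] using conn vsub by blast
qed

lemma balanced_loop_positive:
  assumes bal: "balanced E ends sigma" and e: "e \<in> E" "ends e = {a}"
  shows "sigma e = 1"
proof -
  have "{f\<in>{e}. a \<in> ends f \<and> card (ends f) = 2} = {}" "{f\<in>{e}. ends f = {a}} = {e}"
    using e by auto
  then have "is_circle E ends {e}"
    unfolding is_circle_def verts_of_def degree_def using e by auto
  then show ?thesis
    using bal unfolding balanced_def by fastforce
qed

lemma balanced_link_sign: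
  assumes bal: "balanced (insert e E) ends sigma" and e: "e \<notin> E" "a \<noteq> b" "ends e = {a, b}"
    and sign: "sigma e = 1 \<or> sigma e = -1" and conn: "(a, b) \<in> (adj_rel E ends)\<^sup>*"
    and s: "switching s" and cons: "\<forall>g\<in>E. consistent ends sigma s g"
  shows "sigma e = s a * s b"
proof -
  obtain vs fs where p: "edge_path E ends vs fs" "distinct vs" "hd vs = a" "last vs = b"
    using rtrancl_adj_rel_imp_edge_path[OF conn] by blast
  have fsE: "set fs \<subseteq> E"
    using edge_path_edges_subset[OF p(1)] .
  have "2 \<le> length vs"
    using edge_path_nonempty[OF p(1)] p e(2) by (cases vs; cases "tl vs") auto
  then have "is_circle (insert e E) ends (insert e (set fs))"
    using edge_path_closing_edge_is_circle[OF p(1,2)] p fsE e by blast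
  then have "sigma e * (\<Prod>g\<in>set fs. sigma g) = 1"
    using bal fsE e(1) unfolding balanced_def by (metis List.finite_set prod.insert subsetD)
  moreover have "\<forall>g\<in>set fs. consistent ends sigma s g"
    using cons fsE by blast
  then have "(\<Prod>g\<in>set fs. sigma g) = s a * s b"
    using edge_path_sign_product[OF p(1,2) s] p(3,4) by simp
  ultimately have "sigma e * (s a * s b) = 1"
    by simp
  then show ?thesis
    using sign s unfolding switching_def by auto
qed

lemma rtrancl_adj_rel_edge_iff:
  assumes "g \<in> E" "ends g = {c, d}"
  shows "c \<in> {z. (a, z) \<in> (adj_rel E ends)\<^sup>*} \<longleftrightarrow> d \<in> {z. (a, z) \<in> (adj_rel E ends)\<^sup>*}"
proof -
  have "(c, d) \<in> adj_rel E ends" "(d, c) \<in> adj_rel E ends"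
    using assms unfolding adj_rel_def by (auto simp: insert_commute)
  then show ?thesis
    by (meson mem_Collect_eq rtrancl.rtrancl_into_rtrancl)
qed

lemma consistent_switching_negated_on_closed_set:
  assumes closed: "\<And>g c d. g \<in> E \<Longrightarrow> ends g = {c, d} \<Longrightarrow> c \<in> K \<longleftrightarrow> d \<in> K"
    and cons: "\<forall>g\<in>E. consistent ends sigma s g"
  shows "\<forall>g\<in>E. consistent ends sigma (\<lambda>v. if v \<in> K then - s v else s v) g"
proof
  fix g assume g: "g \<in> E"
  show "consistent ends sigma (\<lambda>v. if v \<in> K then - s v else s v) g"
  proof (cases "card (ends g) = 2")
    case True
    then obtain c d where "c \<noteq> d" "ends g = {c, d}"
      by (auto simp: card_2_iff)
    then show ?thesis
      using cons g closed[OF g] unfolding consistent_def by auto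
  next
    case False
    then show ?thesis
      using cons g unfolding consistent_def by simp
  qed
qed

text \<open>Edges are added one at a time: a new link inside a component closes a
circle with a path, so it is consistent already; a link between two components is made
consistent by negating the switching on the component of one end.\<close>
lemma balanced_imp_consistent_switching:
  assumes "signed_edges E ends sigma" "balanced E ends sigma"
  shows "\<exists>s. switching s \<and> (\<forall>e\<in>E. consistent ends sigma s e)"
proof -
  have "finite E"
    using assms(1) unfolding signed_edges_def by blast
  then show ?thesis
    using assms
  proof (induction E rule: finite_induct)
    case empty
    show ?case
      by (intro exI[of _ "\<lambda>_. 1"]) (simp add: switching_def)
  next
    case (insert e E)
    have sE: "signed_edges E ends sigma"
      using insert.prems(1) signed_edges_subset by blast
    obtain s where s: "switching s" and cons: "\<forall>g\<in>E. consistent ends sigma s g"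
      using insert.IH[OF sE] insert.prems(2) balanced_subset by blast
    have sign: "sigma e = 1 \<or> sigma e = -1"
      using signed_edges_sign[OF insert.prems(1)] by blast
    show ?case
    proof (cases "consistent ends sigma s e")
      case True
      then show ?thesis
        using s cons by blast
    next
      case incons: False
      from insert.prems(1) insertI1 show ?thesis
      proof (cases rule: signed_edges_loop_or_link)
        case (1 a)
        then show ?thesis
          using incons balanced_loop_positive[OF insert.prems(2)]
          unfolding consistent_def by simp
      next
        case (2 a b)
        define K where "K = {z. (a, z) \<in> (adj_rel E ends)\<^sup>*}"
        define s' where "s' v = (if v \<in> K then - s v else s v)" for v
        have "b \<notin> K"
          using balanced_link_sign[OF insert.prems(2) insert.hyps(2) 2 sign _ s cons] incons 2
          unfolding K_def consistent_def by auto
        moreover have "a \<in> K"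
          unfolding K_def by simp
        moreover have "s a = 1 \<or> s a = -1" "s b = 1 \<or> s b = -1"
          using s unfolding switching_def by blast+
        ultimately have "consistent ends sigma s' e"
          using incons sign 2 unfolding consistent_def s'_def by auto
        moreover have "\<forall>g\<in>E. consistent ends sigma s' g"
          unfolding s'_def K_def
          by (rule consistent_switching_negated_on_closed_set[OF rtrancl_adj_rel_edge_iff cons])
        moreover have "switching s'"
          using s unfolding switching_def s'_def by auto
        ultimately show ?thesis
          by blast
      qed
    qed
  qed
qed

text \<open>Whatever the sign chosen at \<open>x\<close>, a negative loop at \<open>x\<close> stays inconsistent, while a link at
\<open>x\<close> is inconsistent for exactly one of the two choices.\<close>
lemma card_inconsistent_at_both_signs_le_degree:
  assumes sE: "signed_edges E ends sigma" and s: "switching s"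
  shows "card {e\<in>E. x \<in> ends e \<and> \<not> consistent ends sigma (s(x := 1)) e}
       + card {e\<in>E. x \<in> ends e \<and> \<not> consistent ends sigma (s(x := -1)) e} \<le> degree E ends x"
proof -
  define A where "A = {e\<in>E. x \<in> ends e}"
  define bad where
    "bad b e = (of_bool (\<not> consistent ends sigma (s(x := b)) e) :: nat)" for b e
  have fA: "finite A"
    using sE unfolding A_def signed_edges_def by simp
  have "bad 1 e + bad (-1) e \<le> end_multiplicity ends e" if e: "e \<in> E" "x \<in> ends e" for e
    using sE e(1)
  proof (cases rule: signed_edges_loop_or_link)
    case 1
    then show ?thesis
      unfolding bad_def end_multiplicity_def by simp
  next
    case (2 c d)
    then obtain y where y: "x \<noteq> y" "ends e = {x, y}"
      using e(2) by (metis insert_commute insertE singletonD)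
    have "consistent ends sigma (s(x := b)) e \<longleftrightarrow> sigma e = b * s y" for b
      using y unfolding consistent_def by simp
    moreover have "sigma e = s y \<or> sigma e = - s y"
      using signed_edges_sign[OF sE e(1)] s unfolding switching_def by (metis minus_minus)
    ultimately have "consistent ends sigma (s(x := 1)) e \<or> consistent ends sigma (s(x := -1)) e"
      by auto
    then show ?thesis
      using y unfolding bad_def end_multiplicity_def by auto
  qed
  then have "(\<Sum>e\<in>A. bad 1 e + bad (-1) e) \<le> (\<Sum>e\<in>A. end_multiplicity ends e)"
    unfolding A_def by (intro sum_mono) simp
  moreover have "(\<Sum>e\<in>A. bad 1 e + bad (-1) e)
      = card {e\<in>E. x \<in> ends e \<and> \<not> consistent ends sigma (s(x := 1)) e}
      + card {e\<in>E. x \<in> ends e \<and> \<not> consistent ends sigma (s(x := -1)) e}"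
    unfolding bad_def sum.distrib using fA by (simp add: A_def Collect_conj_eq Int_assoc)
  ultimately show ?thesis
    unfolding A_def degree_eq_sum_end_multiplicity[OF sE] by simp
qed

lemma exists_sign_with_at_most_one_inconsistent_edge:
  assumes "signed_edges E ends sigma" "switching s" "degree E ends x \<le> 3"
  obtains b where "b = 1 \<or> b = -1"
    "card {e\<in>E. x \<in> ends e \<and> \<not> consistent ends sigma (s(x := b)) e} \<le> 1"
proof -
  have "card {e\<in>E. x \<in> ends e \<and> \<not> consistent ends sigma (s(x := 1)) e} \<le> 1
      \<or> card {e\<in>E. x \<in> ends e \<and> \<not> consistent ends sigma (s(x := -1)) e} \<le> 1"
    using card_inconsistent_at_both_signs_le_degree[OF assms(1,2), of x] assms(3) by linarith
  then show ?thesis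
    using that by (metis add.inverse_inverse)
qed

lemma balanced_by_deleting_one_edge_per_vertex:
  assumes "finite X" "signed_edges E ends sigma" "\<forall>v\<in>X. degree E ends v \<le> 3" "switching s"
    "\<forall>e\<in>E. ends e \<inter> X = {} \<longrightarrow> consistent ends sigma s e"
  shows "\<exists>F\<subseteq>E. card F \<le> card X \<and> balanced (E - F) ends sigma"
  using assms
proof (induction X arbitrary: E s rule: finite_induct)
  case empty
  then have "balanced E ends sigma"
    using balanced_if_consistent by blast
  then show ?case
    by auto
next
  case (insert x X)
  have sE: "signed_edges E ends sigma" and s: "switching s"
    using insert.prems by blast+
  obtain b where b: "b = 1 \<or> b = -1"
    and card_F1: "card {e\<in>E. x \<in> ends e \<and> \<not> consistent ends sigma (s(x := b)) e} \<le> 1"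
    using exists_sign_with_at_most_one_inconsistent_edge[OF sE s] insert.prems(2) by auto
  define F1 where "F1 = {e\<in>E. x \<in> ends e \<and> \<not> consistent ends sigma (s(x := b)) e}"
  define E' where "E' = E - F1"
  have "signed_edges E' ends sigma"
    unfolding E'_def using sE signed_edges_subset by blast
  moreover have "degree E' ends v \<le> 3" if "v \<in> X" for v
  proof -
    have "degree E' ends v \<le> degree E ends v"
      using sE unfolding E'_def signed_edges_def by (intro degree_mono) auto
    then show ?thesis
      using insert.prems(2) that by fastforce
  qed
  moreover have "switching (s(x := b))"
    using s b unfolding switching_def by simp
  moreover have "consistent ends sigma (s(x := b)) e" if "e \<in> E'" "ends e \<inter> X = {}" for e
  proof (cases "x \<in> ends e")
    case True
    then show ?thesis
      using that(1) unfolding E'_def F1_def by blast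
  next
    case False
    then have "ends e \<inter> insert x X = {}"
      using that(2) by blast
    then have "consistent ends sigma s e"
      using insert.prems(4) that(1) unfolding E'_def by blast
    moreover have "consistent ends sigma s e = consistent ends sigma (s(x := b)) e"
      using False by (intro consistent_cong) auto
    ultimately show ?thesis
      by blast
  qed
  ultimately obtain F' where F': "F' \<subseteq> E'" "card F' \<le> card X" "balanced (E' - F') ends sigma"
    using insert.IH[of E' "s(x := b)"] by blast
  have "card (F' \<union> F1) \<le> card X + 1"
    using card_Un_le[of F' F1] F'(2) card_F1 unfolding F1_def by linarith
  then have "card (F' \<union> F1) \<le> card (insert x X)"
    using insert.hyps by simp
  moreover have "E - (F' \<union> F1) = E' - F'" "F' \<union> F1 \<subseteq> E"
    using F'(1) unfolding E'_def F1_def by auto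
  ultimately show ?case
    using F'(3) by (intro exI[of _ "F' \<union> F1"]) simp
qed

lemma edge_deletion_from_vertex_deletion:
  assumes sE: "signed_edges E ends sigma" and "finite X" "\<forall>v\<in>X. degree E ends v \<le> 3"
    and bal: "balanced {e\<in>E. ends e \<inter> X = {}} ends sigma"
  shows "\<exists>F\<subseteq>E. card F \<le> card X \<and> balanced (E - F) ends sigma"
proof -
  have "signed_edges {e\<in>E. ends e \<inter> X = {}} ends sigma"
    by (rule signed_edges_subset[OF sE]) blast
  from balanced_imp_consistent_switching[OF this bal] obtain s
    where s: "switching s" and cons: "\<forall>e\<in>{e\<in>E. ends e \<inter> X = {}}. consistent ends sigma s e"
    by blast
  show ?thesis
    by (rule balanced_by_deleting_one_edge_per_vertex[OF assms(2) sE assms(3) s]) (use cons in blast)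
qed

lemma vertex_deletion_from_edge_deletion:
  assumes "finite F" "\<forall>e\<in>F. ends e \<noteq> {}" "balanced (E - F) ends sigma"
  shows "\<exists>X\<subseteq>\<Union> (ends ` F). card X \<le> card F \<and> balanced {e\<in>E. ends e \<inter> X = {}} ends sigma"
proof -
  define X where "X = (\<lambda>e. SOME v. v \<in> ends e) ` F"
  have pick: "(SOME v. v \<in> ends e) \<in> ends e" if "e \<in> F" for e
    using assms(2) that by (meson ex_in_conv someI_ex)
  have "{e\<in>E. ends e \<inter> X = {}} \<subseteq> E - F"
    unfolding X_def using pick by blast
  then have "balanced {e\<in>E. ends e \<inter> X = {}} ends sigma"
    using assms(3) balanced_subset by blast
  moreover have "X \<subseteq> \<Union> (ends ` F)"
    unfolding X_def using pick by blast
  moreover have "card X \<le> card F"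
    unfolding X_def using assms(1) by (rule card_image_le)
  ultimately show ?thesis
    by blast
qed

lemma Least_eq_if_mutually_bounded:
  fixes P Q :: "nat \<Rightarrow> bool"
  assumes "P n" and PQ: "\<And>k. P k \<Longrightarrow> \<exists>j\<le>k. Q j" and QP: "\<And>k. Q k \<Longrightarrow> \<exists>j\<le>k. P j"
  shows "(LEAST k. P k) = (LEAST k. Q k)"
proof (rule antisym)
  obtain j where "Q j"
    using PQ[OF \<open>P n\<close>] by blast
  then obtain i where "i \<le> (LEAST k. Q k)" "P i"
    using QP[OF LeastI[of Q j]] by blast
  then show "(LEAST k. P k) \<le> (LEAST k. Q k)"
    using Least_le[of P i] by linarith
next
  obtain j where "j \<le> (LEAST k. P k)" "Q j"
    using PQ[OF LeastI[of P n]] \<open>P n\<close> by blast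
  then show "(LEAST k. Q k) \<le> (LEAST k. P k)"
    using Least_le[of Q j] by linarith
qed

theorem theorem1:
  fixes V :: "'v set" and E :: "'e set" and ends :: "'e \<Rightarrow> 'v set" and sigma :: "'e \<Rightarrow> int"
  assumes "signed_graph V E ends sigma"
    and "subcubic V E ends"
  shows "frustration_number V E ends sigma = frustration_index V E ends sigma"
proof -
  have sE: "signed_edges E ends sigma" and "finite V" and ends: "\<forall>e\<in>E. ends e \<subseteq> V"
    using assms(1) unfolding signed_graph_def signed_edges_def by auto
  have nonempty: "\<forall>e\<in>E. ends e \<noteq> {}"
    using assms(1) unfolding signed_graph_def by fastforce
  have "(LEAST k. \<exists>F. F \<subseteq> E \<and> card F = k \<and> balanced (E - F) ends sigma)
      = (LEAST k. \<exists>X. X \<subseteq> V \<and> card X = k \<and> balanced {e\<in>E. ends e \<inter> X = {}} ends sigma)"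
  proof (rule Least_eq_if_mutually_bounded)
    show "\<exists>F. F \<subseteq> E \<and> card F = card E \<and> balanced (E - F) ends sigma"
      by (intro exI[of _ E]) (simp add: balanced_empty)
  next
    fix k assume "\<exists>F. F \<subseteq> E \<and> card F = k \<and> balanced (E - F) ends sigma"
    then obtain F where F: "F \<subseteq> E" "card F = k" "balanced (E - F) ends sigma"
      by blast
    have "finite F"
      using sE F(1) unfolding signed_edges_def by (simp add: finite_subset)
    moreover have "\<forall>e\<in>F. ends e \<noteq> {}"
      using F(1) nonempty by blast
    ultimately have "\<exists>X\<subseteq>\<Union> (ends ` F). card X \<le> card F \<and> balanced {e\<in>E. ends e \<inter> X = {}} ends sigma"
      by (rule vertex_deletion_from_edge_deletion[OF _ _ F(3)])
    moreover have "\<Union> (ends ` F) \<subseteq> V"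
      using F(1) ends by blast
    ultimately show "\<exists>j\<le>k. \<exists>X. X \<subseteq> V \<and> card X = j \<and> balanced {e\<in>E. ends e \<inter> X = {}} ends sigma"
      using F(2) by blast
  next
    fix k assume "\<exists>X. X \<subseteq> V \<and> card X = k \<and> balanced {e\<in>E. ends e \<inter> X = {}} ends sigma"
    then obtain X where X: "X \<subseteq> V" "card X = k" "balanced {e\<in>E. ends e \<inter> X = {}} ends sigma"
      by blast
    have "finite X"
      using X(1) \<open>finite V\<close> by (rule finite_subset)
    moreover have "\<forall>v\<in>X. degree E ends v \<le> 3"
      using X(1) assms(2) unfolding subcubic_def by blast
    ultimately have "\<exists>F\<subseteq>E. card F \<le> card X \<and> balanced (E - F) ends sigma"
      by (rule edge_deletion_from_vertex_deletion[OF sE _ _ X(3)])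
    then show "\<exists>j\<le>k. \<exists>F. F \<subseteq> E \<and> card F = j \<and> balanced (E - F) ends sigma"
      using X(2) by blast
  qed
  then show ?thesis
    unfolding frustration_number_def frustration_index_def by simp
qed

end
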